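(* Let $\omega>0$, $v(x)=\omega^2x^2/2$ on $\mathbb{Z}$, $\gamma\in(-\infty,-1)$, and $H_N=\frac{N^2}{2}\Delta+N^{-2\gamma}v$ on $\ell^2(\mathbb{Z})$. Then $$\lim_{N\to\infty}\frac{E_0(H_N)}{N^{2|\gamma|}}=0,\qquad \lim_{N\to\infty}\frac{E_{2n}(H_N)}{N^{2|\gamma|}}=\lim_{N\to\infty}\frac{E_{2n-1}(H_N)}{N^{2|\gamma|}}=\frac{\omega^2n^2}{2}\quad(n\ge1).$$
   Context: $(\Delta f)(x)=2f(x)-f(x+1)-f(x-1)$; $v$ acts by multiplication. $E_n(H_N)$ is the $n$-th eigenvalue of $H_N$ counted with multiplicity, $n=0,1,2,\dots$. *)

theory Defs
  imports "HOL-Analysis.Analysis"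
begin

definition l2 :: "(int \<Rightarrow> real) \<Rightarrow> bool" where
  "l2 f \<longleftrightarrow> (\<lambda>x. (f x)\<^sup>2) summable_on UNIV"

definition lap :: "(int \<Rightarrow> real) \<Rightarrow> int \<Rightarrow> real" where
  "lap f x = 2 * f x - f (x + 1) - f (x - 1)"

definition harm_pot :: "real \<Rightarrow> int \<Rightarrow> real" where
  "harm_pot \<omega> x = \<omega>\<^sup>2 * (real_of_int x)\<^sup>2 / 2"

definition H_op :: "(int \<Rightarrow> real) \<Rightarrow> real \<Rightarrow> nat \<Rightarrow> (int \<Rightarrow> real) \<Rightarrow> int \<Rightarrow> real" where
  "H_op v \<gamma> N f x = (real N)\<^sup>2 / 2 * lap f x + real N powr (-2 * \<gamma>) * v x * f x"

definition eigenspace :: "((int \<Rightarrow> real) \<Rightarrow> int \<Rightarrow> real) \<Rightarrow> real \<Rightarrow> (int \<Rightarrow> real) set" where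
  "eigenspace H lam = {f. l2 f \<and> H f = (\<lambda>x. lam * f x)}"

definition is_eigenvalue :: "((int \<Rightarrow> real) \<Rightarrow> int \<Rightarrow> real) \<Rightarrow> real \<Rightarrow> bool" where
  "is_eigenvalue H lam \<longleftrightarrow> (\<exists>f\<in>eigenspace H lam. f \<noteq> (\<lambda>_. 0))"

definition lin_indep :: "(int \<Rightarrow> real) set \<Rightarrow> bool" where
  "lin_indep S \<longleftrightarrow> (\<forall>c. (\<lambda>x. \<Sum>f\<in>S. c f * f x) = (\<lambda>_. 0) \<longrightarrow> (\<forall>f\<in>S. c f = 0))"

definition multiplicity_eig :: "((int \<Rightarrow> real) \<Rightarrow> int \<Rightarrow> real) \<Rightarrow> real \<Rightarrow> nat" where
  "multiplicity_eig H lam =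
     Sup {card S | S. finite S \<and> S \<subseteq> eigenspace H lam \<and> lin_indep S}"

definition eig_count :: "((int \<Rightarrow> real) \<Rightarrow> int \<Rightarrow> real) \<Rightarrow> real \<Rightarrow> nat" where
  "eig_count H t = (\<Sum>\<mu>\<in>{\<mu>. is_eigenvalue H \<mu> \<and> \<mu> \<le> t}. multiplicity_eig H \<mu>)"

text \<open>E_n(H): n-th eigenvalue (n = 0,1,2,...) counted with multiplicity.\<close>
definition E :: "((int \<Rightarrow> real) \<Rightarrow> int \<Rightarrow> real) \<Rightarrow> nat \<Rightarrow> real" where
  "E H n = Inf {t. n < eig_count H t}"

end

(* Write H_N = a Delta + b v with a = N^2/2 and b = N^(-2 gamma), so a/b = N^(2 + 2 gamma)/2 -> 0.
   Assume 64 a <= b omega^2, which holds for large N.  An l2 eigenfunction attains its maximal modulus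
   at some site x0, and the eigenvalue equation there puts the eigenvalue within 4a of b v(x0).
   Two l2 solutions of the second-order recurrence have vanishing Wronskian, so every eigenvalue
   is simple and every eigenfunction is even or odd.  Conversely, for k >= 0 and a parity sigma
   (odd only if k > 0), normalising f(k) = 1 turns the eigenvalue equation into a fixed-point
   equation that is a contraction on the bounded functions with that parity; its fixed point is
   an l2 eigenfunction.  Hence the eigenvalues are in bijection with the pairs (k, sigma): one
   near b v(0) = 0 and two near b v(k) for each k >= 1.  Counting gives
   |E_j - b v(n)| <= 4a for j = 2n - 1, 2n, and dividing by b = N^(2|gamma|) proves the limits. *)

theory Submission
  imports Defs
begin

section \<open>Square-summable sequences\<close>

lemma l2_finite_level_set:
  assumes "l2 f" "\<delta> > 0"
  shows "finite {x. \<delta> \<le> \<bar>f x\<bar>}"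
proof (rule ccontr)
  assume inf: "infinite {x. \<delta> \<le> \<bar>f x\<bar>}"
  define I where "I = infsum (\<lambda>x. (f x)\<^sup>2) UNIV"
  obtain n :: nat where n: "I / \<delta>\<^sup>2 < n" using reals_Archimedean2 by blast
  obtain F where F: "finite F" "F \<subseteq> {x. \<delta> \<le> \<bar>f x\<bar>}" "card F = n"
    using infinite_arbitrarily_large[OF inf] by blast
  have "n * \<delta>\<^sup>2 = (\<Sum>x\<in>F. \<delta>\<^sup>2)" using F by simp
  also have "\<dots> \<le> (\<Sum>x\<in>F. (f x)\<^sup>2)"
  proof (rule sum_mono)
    fix x assume "x \<in> F"
    with F assms(2) show "\<delta>\<^sup>2 \<le> (f x)\<^sup>2"
      by (metis mem_Collect_eq power2_abs power_mono subsetD less_imp_le)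
  qed
  also have "\<dots> \<le> I"
    unfolding I_def by (rule finite_sum_le_infsum) (use assms(1) F in \<open>auto simp: l2_def\<close>)
  finally show False using n assms(2) by (simp add: field_simps)
qed

lemma l2_eventually_small:
  assumes "l2 f" "\<delta> > 0"
  obtains m where "\<And>x. m \<le> \<bar>x\<bar> \<Longrightarrow> \<bar>f x\<bar> < \<delta>"
proof -
  have "bdd_above (abs ` {x. \<delta> \<le> \<bar>f x\<bar>})"
    using l2_finite_level_set[OF assms] by (intro bdd_above_finite) simp
  then obtain M where "\<And>x. \<delta> \<le> \<bar>f x\<bar> \<Longrightarrow> \<bar>x\<bar> \<le> M" by (auto simp: bdd_above_def)
  then show thesis by (intro that[of "M + 1"]) (smt (verit))
qed

lemma l2_abs_max:
  assumes "l2 f"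
  obtains x0 where "\<And>x. \<bar>f x\<bar> \<le> \<bar>f x0\<bar>"
proof (cases "\<forall>x. f x = 0")
  case True
  then show thesis by (intro that[of 0]) simp
next
  case False
  then obtain x1 where x1: "f x1 \<noteq> 0" by blast
  define A where "A = {x. \<bar>f x1\<bar> \<le> \<bar>f x\<bar>}"
  have A: "finite ((\<lambda>x. \<bar>f x\<bar>) ` A)" "x1 \<in> A"
    using l2_finite_level_set[OF assms, of "\<bar>f x1\<bar>"] x1 by (auto simp: A_def)
  then have "Max ((\<lambda>x. \<bar>f x\<bar>) ` A) \<in> (\<lambda>x. \<bar>f x\<bar>) ` A" by (intro Max_in) auto
  then obtain x0 where x0: "x0 \<in> A" "\<bar>f x0\<bar> = Max ((\<lambda>x. \<bar>f x\<bar>) ` A)" by auto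
  have "\<bar>f x\<bar> \<le> \<bar>f x0\<bar>" for x
  proof (cases "x \<in> A")
    case True
    then show ?thesis unfolding x0(2) using A(1) by (intro Max_ge) auto
  next
    case False
    then show ?thesis using x0(1) by (auto simp: A_def)
  qed
  then show thesis by (rule that)
qed

lemma l2_reflect:
  assumes "l2 f"
  shows "l2 (\<lambda>x. f (- x))"
proof -
  have "(\<lambda>x. (f x)\<^sup>2) summable_on (uminus ` UNIV)" using assms by (simp add: l2_def)
  then show ?thesis by (subst (asm) summable_on_reindex) (auto simp: l2_def o_def)
qed

lemma summable_on_inverse_square_int: "(\<lambda>x::int. 1 / ((real_of_int x)\<^sup>2 + 1)) summable_on UNIV"
proof -
  define h where "h = (\<lambda>x::int. 1 / ((real_of_int x)\<^sup>2 + 1))"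
  have "summable (\<lambda>n::nat. 1 / ((real n)\<^sup>2 + 1))"
  proof (rule summable_comparison_test[OF _ inverse_power_summable[of 2]])
    show "\<exists>N. \<forall>n\<ge>N. norm (1 / ((real n)\<^sup>2 + 1)) \<le> inverse ((real n)\<^sup>2)"
      by (intro exI[of _ 1]) (auto simp: inverse_eq_divide frac_le)
  qed simp
  then have nat: "(\<lambda>n::nat. 1 / ((real n)\<^sup>2 + 1)) summable_on UNIV"
    by (intro norm_summable_imp_summable_on) simp
  have "h summable_on (int ` UNIV \<union> (\<lambda>n. - int n) ` UNIV)"
    using nat by (intro summable_on_union; subst summable_on_reindex) (auto simp: o_def h_def inj_on_def)
  moreover have "int ` UNIV \<union> (\<lambda>n. - int n) ` UNIV = UNIV"
  proof -
    have "x \<in> int ` UNIV \<union> (\<lambda>n. - int n) ` UNIV" for x :: int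
      by (cases "0 \<le> x") (auto intro: image_eqI[of _ int "nat x"] image_eqI[of _ _ "nat (- x)"])
    then show ?thesis by blast
  qed
  ultimately show ?thesis by (simp add: h_def)
qed

lemma l2_if_square_decay:
  assumes "\<And>x. (f x)\<^sup>2 \<le> C / ((real_of_int x)\<^sup>2 + 1)"
  shows "l2 f"
  unfolding l2_def using assms
  by (intro summable_on_comparison_test[OF summable_on_cmult_right[OF summable_on_inverse_square_int]])
     auto

section \<open>The discrete Laplacian and second-order difference equations\<close>

lemma lap_reflect: "lap (\<lambda>x. f (- x)) x = lap f (- x)"
proof -
  have "- (x + 1) = - x - 1" "- (x - 1) = - x + 1" by simp_all
  then show ?thesis by (simp only: lap_def)
qed

lemma lap_cmult: "lap (\<lambda>y. c * f y) x = c * lap f x"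
  by (simp add: lap_def algebra_simps)

lemma lap_diff: "lap f x - lap g x = lap (\<lambda>y. f y - g y) x"
  by (simp add: lap_def algebra_simps)

lemma abs_lap_le:
  assumes "\<And>y. \<bar>f y\<bar> \<le> M"
  shows "\<bar>lap f x\<bar> \<le> 4 * M"
  using assms[of x] assms[of "x + 1"] assms[of "x - 1"] unfolding lap_def by linarith

lemma lap_parity:
  assumes "\<And>x. f (- x) = \<sigma> * f x"
  shows "lap f (- x) = \<sigma> * lap f x"
  using lap_reflect[of f x] lap_cmult[of \<sigma> f x] assms by simp

lemma difference_eq_zero_if_two_zeros:
  fixes h :: "int \<Rightarrow> real"
  assumes a: "a \<noteq> 0" and eq: "\<And>x. a * lap h x + w x * h x = \<mu> * h x"
    and zeros: "h x0 = 0" "h (x0 + 1) = 0"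
  shows "h = (\<lambda>_. 0)"
proof -
  have forward: "h (x + 1) = 0" if "h x = 0" "h (x - 1) = 0" for x
    using eq[of x] that a by (simp add: lap_def)
  have backward: "h (x - 1) = 0" if "h x = 0" "h (x + 1) = 0" for x
    using eq[of x] that a by (simp add: lap_def)
  have "h x = 0 \<and> h (x + 1) = 0" for x
  proof (induction x rule: int_induct[where k = x0])
    case base
    then show ?case using zeros by simp
  next
    case (step1 i)
    then show ?case using forward[of "i + 1"] by simp
  next
    case (step2 i)
    then show ?case using backward[of i] by simp
  qed
  then show ?thesis by auto
qed

lemma difference_eq_wronskian_const:
  fixes f g :: "int \<Rightarrow> real"
  assumes a: "a \<noteq> 0"
    and ef: "\<And>x. a * lap f x + w x * f x = \<mu> * f x"
    and eg: "\<And>x. a * lap g x + w x * g x = \<mu> * g x"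
  shows "f x * g (x + 1) - f (x + 1) * g x = f 0 * g 1 - f 1 * g 0"
proof -
  define W where "W x = f x * g (x + 1) - f (x + 1) * g x" for x
  have step: "W x = W (x - 1)" for x
  proof -
    have "a * (W x - W (x - 1)) =
        g x * (a * lap f x + w x * f x - \<mu> * f x) - f x * (a * lap g x + w x * g x - \<mu> * g x)"
      by (simp add: W_def lap_def algebra_simps)
    then show ?thesis using ef[of x] eg[of x] a by simp
  qed
  have "W x = W 0"
  proof (induction x rule: int_induct[where k = 0])
    case base
    then show ?case by simp
  next
    case (step1 i)
    then show ?case using step[of "i + 1"] by simp
  next
    case (step2 i)
    then show ?case using step[of i] by simp
  qed
  then show ?thesis by (simp add: W_def)
qed

text \<open>The Wronskian is constant, and for square-summable solutions it tends to 0.\<close>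

lemma l2_difference_eq_wronskian_eq_0:
  fixes f g :: "int \<Rightarrow> real"
  assumes a: "a \<noteq> 0"
    and ef: "\<And>x. a * lap f x + w x * f x = \<mu> * f x"
    and eg: "\<And>x. a * lap g x + w x * g x = \<mu> * g x"
    and l2: "l2 f" "l2 g"
  shows "f x * g (x + 1) - f (x + 1) * g x = 0"
proof -
  define W0 where "W0 = f 0 * g 1 - f 1 * g 0"
  have const: "f y * g (y + 1) - f (y + 1) * g y = W0" for y
    unfolding W0_def by (rule difference_eq_wronskian_const[OF a ef eg])
  have "W0 = 0"
  proof (rule ccontr)
    assume W0: "W0 \<noteq> 0"
    define \<delta> where "\<delta> = sqrt (\<bar>W0\<bar> / 4)"
    have \<delta>: "\<delta> > 0" "\<delta> * \<delta> = \<bar>W0\<bar> / 4" using W0 by (simp_all add: \<delta>_def)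
    obtain m1 where m1: "\<And>x. m1 \<le> \<bar>x\<bar> \<Longrightarrow> \<bar>f x\<bar> < \<delta>"
      using l2_eventually_small[OF l2(1) \<delta>(1)] by blast
    obtain m2 where m2: "\<And>x. m2 \<le> \<bar>x\<bar> \<Longrightarrow> \<bar>g x\<bar> < \<delta>"
      using l2_eventually_small[OF l2(2) \<delta>(1)] by blast
    define y where "y = \<bar>m1\<bar> + \<bar>m2\<bar>"
    have "\<bar>f y\<bar> < \<delta>" "\<bar>f (y + 1)\<bar> < \<delta>" "\<bar>g y\<bar> < \<delta>" "\<bar>g (y + 1)\<bar> < \<delta>"
      using m1 m2 by (auto simp: y_def)
    then have "\<bar>f y\<bar> * \<bar>g (y + 1)\<bar> + \<bar>f (y + 1)\<bar> * \<bar>g y\<bar> \<le> \<delta> * \<delta> + \<delta> * \<delta>"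
      by (intro add_mono mult_mono) auto
    moreover have "\<bar>W0\<bar> \<le> \<bar>f y\<bar> * \<bar>g (y + 1)\<bar> + \<bar>f (y + 1)\<bar> * \<bar>g y\<bar>"
      unfolding const[of y, symmetric] abs_mult[symmetric] by (rule abs_triangle_ineq4)
    ultimately show False using W0 \<delta>(2) by linarith
  qed
  then show ?thesis using const by simp
qed

lemma l2_difference_eq_solutions_proportional:
  fixes f g :: "int \<Rightarrow> real"
  assumes a: "a \<noteq> 0"
    and ef: "\<And>x. a * lap f x + w x * f x = \<mu> * f x"
    and eg: "\<And>x. a * lap g x + w x * g x = \<mu> * g x"
    and l2: "l2 f" "l2 g" and nz: "f x0 \<noteq> 0"
  shows "g = (\<lambda>x. (g x0 / f x0) * f x)"
proof -
  define c where "c = g x0 / f x0"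
  define h where "h x = g x - c * f x" for x
  have eh: "a * lap h x + w x * h x = \<mu> * h x" for x
  proof -
    have "a * lap h x + w x * h x - \<mu> * h x =
        (a * lap g x + w x * g x - \<mu> * g x) - c * (a * lap f x + w x * f x - \<mu> * f x)"
      by (simp add: h_def lap_def algebra_simps)
    then show ?thesis using ef[of x] eg[of x] by simp
  qed
  have h0: "h x0 = 0" using nz by (simp add: h_def c_def)
  have "f x0 * h (x0 + 1) = f x0 * g (x0 + 1) - f (x0 + 1) * g x0"
    using nz by (simp add: h_def c_def algebra_simps)
  then have h1: "h (x0 + 1) = 0"
    using l2_difference_eq_wronskian_eq_0[OF a ef eg l2, of x0] nz by simp
  have "h = (\<lambda>_. 0)" by (rule difference_eq_zero_if_two_zeros[OF a eh h0 h1])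
  then show ?thesis unfolding c_def[symmetric] by (simp add: h_def fun_eq_iff)
qed

section \<open>The harmonic oscillator on the lattice\<close>

definition harm_osc :: "real \<Rightarrow> real \<Rightarrow> real \<Rightarrow> (int \<Rightarrow> real) \<Rightarrow> int \<Rightarrow> real" where
  "harm_osc \<omega> a b f x = a * lap f x + b * harm_pot \<omega> x * f x"

lemma H_op_eq_harm_osc:
  "H_op (harm_pot \<omega>) \<gamma> N = harm_osc \<omega> ((real N)\<^sup>2 / 2) (real N powr (-2 * \<gamma>))"
  by (simp add: H_op_def harm_osc_def fun_eq_iff)

lemma eigenspace_harm_osc_iff:
  "f \<in> eigenspace (harm_osc \<omega> a b) \<mu> \<longleftrightarrow>
     l2 f \<and> (\<forall>x. a * lap f x + b * harm_pot \<omega> x * f x = \<mu> * f x)"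
  by (auto simp: eigenspace_def harm_osc_def fun_eq_iff)

lemma harm_pot_uminus [simp]: "harm_pot \<omega> (- x) = harm_pot \<omega> x"
  by (simp add: harm_pot_def)

lemma harm_pot_abs [simp]: "harm_pot \<omega> \<bar>x\<bar> = harm_pot \<omega> x"
  by (simp add: harm_pot_def)

lemma harm_pot_mono:
  assumes "k \<le> n"
  shows "harm_pot \<omega> (int k) \<le> harm_pot \<omega> (int n)"
  using assms by (auto simp: harm_pot_def intro: mult_left_mono power_mono)

lemma harm_pot_gap:
  assumes "x \<noteq> int k" "x \<noteq> - int k"
  shows "\<omega>\<^sup>2 / 2 \<le> \<bar>harm_pot \<omega> x - harm_pot \<omega> (int k)\<bar>"
proof -
  have "x\<^sup>2 \<noteq> (int k)\<^sup>2" using assms by (simp add: power2_eq_iff)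
  then have "(1::real) \<le> \<bar>of_int (x\<^sup>2 - (int k)\<^sup>2)\<bar>" by linarith
  then have "\<omega>\<^sup>2 * 1 \<le> \<omega>\<^sup>2 * \<bar>(real_of_int x)\<^sup>2 - (real k)\<^sup>2\<bar>" by (intro mult_left_mono) auto
  then show ?thesis by (simp add: harm_pot_def abs_mult flip: diff_divide_distrib right_diff_distrib)
qed

lemma harm_pot_gap_mono:
  assumes "k < n"
  shows "harm_pot \<omega> (int k) + \<omega>\<^sup>2 / 2 \<le> harm_pot \<omega> (int n)"
proof -
  have "(real k + 1)\<^sup>2 \<le> (real n)\<^sup>2" using assms by (intro power_mono) auto
  then have "(real k)\<^sup>2 + 1 \<le> (real n)\<^sup>2" by (simp add: power2_eq_square algebra_simps)
  then have "\<omega>\<^sup>2 * ((real k)\<^sup>2 + 1) \<le> \<omega>\<^sup>2 * (real n)\<^sup>2" by (intro mult_left_mono) auto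
  then show ?thesis by (simp add: harm_pot_def algebra_simps)
qed

lemma harm_osc_reflect: "harm_osc \<omega> a b (\<lambda>x. f (- x)) x = harm_osc \<omega> a b f (- x)"
  by (simp add: harm_osc_def lap_reflect)

lemma harm_osc_eigenfunctions_proportional:
  assumes "a \<noteq> 0" "f \<in> eigenspace (harm_osc \<omega> a b) \<mu>" "g \<in> eigenspace (harm_osc \<omega> a b) \<mu>"
    and "f x0 \<noteq> 0"
  shows "g = (\<lambda>x. (g x0 / f x0) * f x)"
  using assms
  by (intro l2_difference_eq_solutions_proportional[where w = "\<lambda>x. b * harm_pot \<omega> x"])
     (auto simp: eigenspace_harm_osc_iff)

lemma harm_osc_eigenfunction_parity:
  assumes a: "a \<noteq> 0" and f: "f \<in> eigenspace (harm_osc \<omega> a b) \<mu>" and nz: "f x0 \<noteq> 0"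
  obtains \<sigma> where "\<sigma> = 1 \<or> \<sigma> = -1" "\<And>x. f (- x) = \<sigma> * f x"
proof -
  have reflected: "(\<lambda>x. f (- x)) \<in> eigenspace (harm_osc \<omega> a b) \<mu>"
    using f l2_reflect harm_osc_reflect[of \<omega> a b f] by (auto simp: eigenspace_def fun_eq_iff)
  define \<sigma> where "\<sigma> = f (- x0) / f x0"
  have "(\<lambda>x. f (- x)) = (\<lambda>x. \<sigma> * f x)"
    unfolding \<sigma>_def by (rule harm_osc_eigenfunctions_proportional[OF a f reflected nz])
  then have parity: "f (- x) = \<sigma> * f x" for x using fun_cong by metis
  have "f x0 = \<sigma> * (\<sigma> * f x0)" using parity[of "- x0"] parity[of x0] by simp
  then have "\<sigma>\<^sup>2 = 1" using nz by (simp add: power2_eq_square)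
  then show thesis using parity by (intro that) (auto simp: power2_eq_1_iff)
qed

text \<open>At a point where an eigenfunction attains its maximal modulus, the kinetic term is at most
  \<open>4 a\<close> times that modulus.\<close>

lemma harm_osc_eigenvalue_near_peak:
  assumes "a \<ge> 0" "\<And>x. \<bar>f x\<bar> \<le> \<bar>f x0\<bar>" "f x0 \<noteq> 0" "harm_osc \<omega> a b f x0 = \<mu> * f x0"
  shows "\<bar>\<mu> - b * harm_pot \<omega> x0\<bar> \<le> 4 * a"
proof -
  have "(\<mu> - b * harm_pot \<omega> x0) * f x0 = a * lap f x0"
    using assms(4) by (simp add: harm_osc_def algebra_simps)
  then have "\<bar>\<mu> - b * harm_pot \<omega> x0\<bar> * \<bar>f x0\<bar> = a * \<bar>lap f x0\<bar>"
    using assms(1) by (metis abs_mult abs_of_nonneg)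
  also have "\<dots> \<le> a * (4 * \<bar>f x0\<bar>)" using assms(1,2) by (intro mult_left_mono abs_lap_le) auto
  finally show ?thesis using assms(3) by simp
qed

lemma multiplicity_eig_eq_1:
  assumes f0: "f0 \<in> eigenspace H \<mu>" and nz: "f0 x0 \<noteq> 0"
    and span: "\<And>g. g \<in> eigenspace H \<mu> \<Longrightarrow> \<exists>c. g = (\<lambda>x. c * f0 x)"
  shows "multiplicity_eig H \<mu> = 1"
proof -
  define A where "A = {card S | S. finite S \<and> S \<subseteq> eigenspace H \<mu> \<and> lin_indep S}"
  have "lin_indep {f0}"
    unfolding lin_indep_def using nz by (auto simp: fun_eq_iff)
  then have one: "1 \<in> A" unfolding A_def using f0 by (intro CollectI exI[of _ "{f0}"]) auto
  have "card S \<le> 1" if S: "finite S" "S \<subseteq> eigenspace H \<mu>" "lin_indep S" for S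
  proof (rule ccontr)
    assume "\<not> card S \<le> 1"
    then obtain g1 g2 where g: "g1 \<in> S" "g2 \<in> S" "g1 \<noteq> g2"
      using card_le_Suc0_iff_eq[OF S(1)] by auto
    obtain c1 c2 where c: "g1 = (\<lambda>x. c1 * f0 x)" "g2 = (\<lambda>x. c2 * f0 x)"
      using span g S(2) by blast
    define c where "c g = (if g = g1 then c2 else if g = g2 then - c1 else 0)" for g
    have "(\<Sum>f\<in>S. c f * f x) = (\<Sum>f\<in>{g1, g2}. c f * f x)" for x
      by (rule sum.mono_neutral_right) (use S g in \<open>auto simp: c_def\<close>)
    then have "(\<lambda>x. \<Sum>f\<in>S. c f * f x) = (\<lambda>_. 0)"
      using g by (simp add: fun_eq_iff c_def c)
    then have "c g1 = 0" "c g2 = 0" using S(3) g unfolding lin_indep_def by blast+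
    then show False using g c by (auto simp: c_def)
  qed
  then have "Sup A = 1" using one by (intro cSup_eq_maximum) (auto simp: A_def)
  then show ?thesis by (simp add: multiplicity_eig_def A_def)
qed

lemma multiplicity_eig_harm_osc:
  assumes "a \<noteq> 0" "is_eigenvalue (harm_osc \<omega> a b) \<mu>"
  shows "multiplicity_eig (harm_osc \<omega> a b) \<mu> = 1"
proof -
  from assms(2) obtain f where f: "f \<in> eigenspace (harm_osc \<omega> a b) \<mu>" "f \<noteq> (\<lambda>_. 0)"
    by (auto simp: is_eigenvalue_def)
  then obtain x0 where "f x0 \<noteq> 0" by auto
  with f show ?thesis
    using harm_osc_eigenfunctions_proportional[OF assms(1)] by (intro multiplicity_eig_eq_1) blast+
qed

lemma eig_count_harm_osc:
  assumes "a \<noteq> 0"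
  shows "eig_count (harm_osc \<omega> a b) t = card {\<mu>. is_eigenvalue (harm_osc \<omega> a b) \<mu> \<and> \<mu> \<le> t}"
  unfolding eig_count_def using multiplicity_eig_harm_osc[OF assms] by simp

section \<open>Eigenfunctions peaked at a lattice site, as fixed points\<close>

definition small_hopping :: "real \<Rightarrow> real \<Rightarrow> real \<Rightarrow> bool" where
  "small_hopping \<omega> a b \<longleftrightarrow> a > 0 \<and> b > 0 \<and> 64 * a \<le> b * \<omega>\<^sup>2"

definition admissible_parity :: "nat \<Rightarrow> real \<Rightarrow> bool" where
  "admissible_parity k \<sigma> \<longleftrightarrow> \<sigma> = 1 \<or> (\<sigma> = -1 \<and> k \<noteq> 0)"

definition peak_normalized :: "nat \<Rightarrow> real \<Rightarrow> (int \<Rightarrow> real) \<Rightarrow> bool" where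
  "peak_normalized k \<sigma> f \<longleftrightarrow> (\<forall>x. \<bar>f x\<bar> \<le> 1) \<and> (\<forall>x. f (- x) = \<sigma> * f x) \<and> f (int k) = 1"

text \<open>With \<open>f k = 1\<close>, the eigenvalue equation at \<open>k\<close> forces the eigenvalue \<open>peak_level\<close>; at every
  other site except \<open>-k\<close> it can be solved for \<open>f x\<close>, which gives \<open>peak_map\<close>.\<close>

definition peak_level :: "real \<Rightarrow> real \<Rightarrow> real \<Rightarrow> nat \<Rightarrow> (int \<Rightarrow> real) \<Rightarrow> real" where
  "peak_level \<omega> a b k f = b * harm_pot \<omega> (int k) + a * lap f (int k)"

definition peak_map :: "real \<Rightarrow> real \<Rightarrow> real \<Rightarrow> nat \<Rightarrow> real \<Rightarrow> (int \<Rightarrow> real) \<Rightarrow> int \<Rightarrow> real" where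
  "peak_map \<omega> a b k \<sigma> f x =
     (if x = int k then 1 else if x = - int k then \<sigma>
      else - a * lap f x / (b * harm_pot \<omega> x - peak_level \<omega> a b k f))"

lemma peak_level_near_potential:
  assumes "\<And>y. \<bar>f y\<bar> \<le> 1" "a \<ge> 0"
  shows "\<bar>peak_level \<omega> a b k f - b * harm_pot \<omega> (int k)\<bar> \<le> 4 * a"
proof -
  have "a * \<bar>lap f (int k)\<bar> \<le> a * 4" using assms abs_lap_le[of f 1] by (intro mult_left_mono) auto
  then show ?thesis using assms(2) by (simp add: peak_level_def abs_mult)
qed

lemma peak_denominator_lower_bound:
  assumes small: "small_hopping \<omega> a b" and near: "\<bar>\<mu> - b * harm_pot \<omega> (int k)\<bar> \<le> 4 * a"
    and x: "x \<noteq> int k" "x \<noteq> - int k"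
  shows "b * \<omega>\<^sup>2 / 4 \<le> \<bar>b * harm_pot \<omega> x - \<mu>\<bar>"
proof -
  have b: "b > 0" and a: "64 * a \<le> b * \<omega>\<^sup>2" using small by (auto simp: small_hopping_def)
  have "b * \<omega>\<^sup>2 / 2 \<le> b * \<bar>harm_pot \<omega> x - harm_pot \<omega> (int k)\<bar>"
    using harm_pot_gap[OF x] b by (simp add: mult_left_mono)
  also have "\<dots> = \<bar>b * harm_pot \<omega> x - b * harm_pot \<omega> (int k)\<bar>"
    using b by (simp add: abs_mult flip: right_diff_distrib)
  finally show ?thesis using near a by linarith
qed

lemma abs_hopping_quotient_le:
  assumes small: "small_hopping \<omega> a b" and D: "b * \<omega>\<^sup>2 / 4 \<le> \<bar>D\<bar>" and L: "\<bar>L\<bar> \<le> 4"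
  shows "\<bar>a * L / D\<bar> \<le> 1"
proof -
  have a: "a > 0" "64 * a \<le> b * \<omega>\<^sup>2" using small by (auto simp: small_hopping_def)
  have "\<bar>a * L\<bar> \<le> a * 4" using L a by (simp add: abs_mult)
  also have "\<dots> < \<bar>D\<bar>" using D a by linarith
  finally show ?thesis by (simp add: abs_divide)
qed

lemma abs_peak_map_le:
  assumes small: "small_hopping \<omega> a b" and \<sigma>: "admissible_parity k \<sigma>" and f: "\<And>y. \<bar>f y\<bar> \<le> 1"
  shows "\<bar>peak_map \<omega> a b k \<sigma> f x\<bar> \<le> 1"
proof -
  have "\<bar>a * lap f x / (b * harm_pot \<omega> x - peak_level \<omega> a b k f)\<bar> \<le> 1"
    if "x \<noteq> int k" "x \<noteq> - int k"
    using small that f peak_level_near_potential[OF f, of a]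
    by (intro abs_hopping_quotient_le[OF small] peak_denominator_lower_bound abs_lap_le[of f 1, simplified])
       (auto simp: small_hopping_def)
  then show ?thesis using \<sigma> by (auto simp: peak_map_def admissible_parity_def)
qed

lemma peak_map_parity:
  assumes \<sigma>: "admissible_parity k \<sigma>" and f: "\<And>x. f (- x) = \<sigma> * f x"
  shows "peak_map \<omega> a b k \<sigma> f (- x) = \<sigma> * peak_map \<omega> a b k \<sigma> f x"
  using \<sigma> lap_parity[where f = f, OF f] by (auto simp: peak_map_def admissible_parity_def)

lemma peak_map_normalized:
  assumes "small_hopping \<omega> a b" "admissible_parity k \<sigma>" "peak_normalized k \<sigma> f"
  shows "peak_normalized k \<sigma> (peak_map \<omega> a b k \<sigma> f)"
  using assms abs_peak_map_le peak_map_parity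
  by (auto simp: peak_normalized_def peak_map_def[of _ _ _ _ _ _ "int k"])

lemma ex_peak_normalized:
  assumes "admissible_parity k \<sigma>"
  shows "\<exists>f. peak_normalized k \<sigma> f"
proof
  show "peak_normalized k \<sigma> (\<lambda>x. if x = int k then 1 else if x = - int k then \<sigma> else 0)"
    using assms by (auto simp: peak_normalized_def admissible_parity_def)
qed

lemma abs_diff_quotients_le:
  fixes a d G L1 L2 D1 D2 :: real
  assumes G: "G > 0" "G \<le> \<bar>D1\<bar>" "G \<le> \<bar>D2\<bar>" and L: "\<bar>L1 - L2\<bar> \<le> 4 * d" "\<bar>L2\<bar> \<le> 4"
    and D: "\<bar>D1 - D2\<bar> \<le> 4 * a * d" and a: "a \<ge> 0" "16 * a \<le> G" and d: "d \<ge> 0"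
  shows "\<bar>a * L1 / D1 - a * L2 / D2\<bar> \<le> d / 2"
proof -
  have D1: "D1 \<noteq> 0" and D2: "D2 \<noteq> 0" using G by auto
  have "\<bar>a * (L1 - L2) / D1\<bar> = a * \<bar>L1 - L2\<bar> / \<bar>D1\<bar>" using a by (simp add: abs_mult abs_divide)
  also have "\<dots> \<le> a * (4 * d) / G" using a G L by (intro frac_le mult_left_mono) auto
  also have "\<dots> \<le> d / 4" using mult_right_mono[OF a(2) d] G by (simp add: field_simps)
  finally have t1: "\<bar>a * (L1 - L2) / D1\<bar> \<le> d / 4" .
  have "\<bar>a * L2 * (D2 - D1) / (D1 * D2)\<bar> = a * \<bar>L2\<bar> * \<bar>D1 - D2\<bar> / (\<bar>D1\<bar> * \<bar>D2\<bar>)"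
    using a by (simp add: abs_mult abs_divide abs_minus_commute)
  also have "\<dots> \<le> a * 4 * (4 * a * d) / (G * G)"
    using a G L D d by (intro frac_le mult_mono mult_left_mono) auto
  also have "\<dots> = (4 * a) * (4 * a) * d / (G * G)" by simp
  also have "\<dots> \<le> (G / 4) * (G / 4) * d / (G * G)"
    using a G d by (intro divide_right_mono mult_right_mono mult_mono) auto
  also have "\<dots> \<le> d / 4" using G d by (simp add: field_simps)
  finally have t2: "\<bar>a * L2 * (D2 - D1) / (D1 * D2)\<bar> \<le> d / 4" .
  have "a * L1 / D1 - a * L2 / D2 = a * (L1 - L2) / D1 + a * L2 * (D2 - D1) / (D1 * D2)"
    using D1 D2 by (simp add: field_simps)
  then have "\<bar>a * L1 / D1 - a * L2 / D2\<bar> \<le> \<bar>a * (L1 - L2) / D1\<bar> + \<bar>a * L2 * (D2 - D1) / (D1 * D2)\<bar>"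
    by (simp only: abs_triangle_ineq)
  from order_trans[OF this add_mono[OF t1 t2]] show ?thesis by simp
qed

lemma peak_map_contraction:
  assumes small: "small_hopping \<omega> a b" and f: "\<And>y. \<bar>f y\<bar> \<le> 1" and g: "\<And>y. \<bar>g y\<bar> \<le> 1"
    and d: "\<And>y. \<bar>f y - g y\<bar> \<le> d"
  shows "\<bar>peak_map \<omega> a b k \<sigma> f x - peak_map \<omega> a b k \<sigma> g x\<bar> \<le> d / 2"
proof (cases "x = int k \<or> x = - int k")
  case True
  then show ?thesis using d[of 0] by (auto simp: peak_map_def)
next
  case False
  have a: "a > 0" "16 * a \<le> b * \<omega>\<^sup>2 / 4" using small by (auto simp: small_hopping_def)
  have d0: "d \<ge> 0" using d[of 0] by (meson abs_ge_zero order_trans)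
  have lap_close: "\<bar>lap f y - lap g y\<bar> \<le> 4 * d" for y
    unfolding lap_diff by (rule abs_lap_le) (rule d)
  define D1 where "D1 = b * harm_pot \<omega> x - peak_level \<omega> a b k f"
  define D2 where "D2 = b * harm_pot \<omega> x - peak_level \<omega> a b k g"
  have "\<bar>peak_level \<omega> a b k f - b * harm_pot \<omega> (int k)\<bar> \<le> 4 * a"
    "\<bar>peak_level \<omega> a b k g - b * harm_pot \<omega> (int k)\<bar> \<le> 4 * a"
    using peak_level_near_potential f g a(1) by auto
  then have G: "b * \<omega>\<^sup>2 / 4 \<le> \<bar>D1\<bar>" "b * \<omega>\<^sup>2 / 4 \<le> \<bar>D2\<bar>"
    unfolding D1_def D2_def using False peak_denominator_lower_bound[OF small] by auto
  have "D1 - D2 = a * (lap g (int k) - lap f (int k))"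
    by (simp add: D1_def D2_def peak_level_def algebra_simps)
  then have "\<bar>D1 - D2\<bar> \<le> 4 * a * d"
    using a lap_close[of "int k"] by (simp add: abs_mult abs_minus_commute mult_left_mono)
  moreover have "\<bar>lap g x\<bar> \<le> 4" using abs_lap_le[of g 1] g by simp
  ultimately have "\<bar>a * lap f x / D1 - a * lap g x / D2\<bar> \<le> d / 2"
    using G a d0 lap_close[of x] by (intro abs_diff_quotients_le[where G = "b * \<omega>\<^sup>2 / 4"]) auto
  then show ?thesis using False by (simp add: peak_map_def D1_def D2_def abs_minus_commute)
qed

lemma complete_UNIV_bcontfun: "complete (UNIV :: ('a::topological_space \<Rightarrow>\<^sub>C 'b::complete_space) set)"
proof (rule completeI)
  fix f :: "nat \<Rightarrow> ('a \<Rightarrow>\<^sub>C 'b)"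
  assume "Cauchy f"
  then obtain g where "uniform_limit UNIV f g sequentially"
    using uniformly_convergent_eq_cauchy[of "\<lambda>_. True" f]
    unfolding Cauchy_def uniform_limit_sequentially_iff
    by (metis dist_fun_lt_imp_dist_val_lt)
  from uniform_limit_bcontfunE[OF this sequentially_bot]
  obtain l where "f \<longlonglongrightarrow> l" by metis
  then show "\<exists>l\<in>UNIV. f \<longlonglongrightarrow> l" by blast
qed

lemma closed_peak_normalized: "closed {g :: int \<Rightarrow>\<^sub>C real. peak_normalized k \<sigma> g}"
proof -
  have eval: "continuous_on UNIV (\<lambda>g :: int \<Rightarrow>\<^sub>C real. apply_bcontfun g x)" for x
    unfolding continuous_on_iff
  proof (intro ballI allI impI)
    fix g :: "int \<Rightarrow>\<^sub>C real" and e :: real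
    assume "e > 0"
    then show "\<exists>d>0. \<forall>g'\<in>UNIV. dist g' g < d \<longrightarrow> dist (g' x) (g x) < e"
      using dist_bounded[of g' x g for g'] by (intro exI[of _ e]) (auto intro: le_less_trans)
  qed
  have "{g :: int \<Rightarrow>\<^sub>C real. peak_normalized k \<sigma> g} =
      (\<Inter>x. {g. apply_bcontfun g x \<le> 1} \<inter> {g. - 1 \<le> apply_bcontfun g x}
         \<inter> {g. apply_bcontfun g (- x) = \<sigma> * apply_bcontfun g x}) \<inter> {g. apply_bcontfun g (int k) = 1}"
    by (auto simp: peak_normalized_def abs_le_iff)
  also have "closed \<dots>"
    by (intro closed_Int closed_INT ballI closed_Collect_le closed_Collect_eq eval continuous_on_const
        continuous_on_mult continuous_on_minus)
  finally show ?thesis .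
qed

lemma peak_normalized_bcontfun: "peak_normalized k \<sigma> f \<Longrightarrow> f \<in> bcontfun"
  by (intro bcontfun_normI[where b = 1]) (auto simp: peak_normalized_def)

lemma peak_map_bcontfun_unique_fixed_point:
  assumes small: "small_hopping \<omega> a b" and \<sigma>: "admissible_parity k \<sigma>"
  shows "\<exists>!g \<in> {g :: int \<Rightarrow>\<^sub>C real. peak_normalized k \<sigma> g}. Bcontfun (peak_map \<omega> a b k \<sigma> g) = g"
proof (rule Banach_fix[where c = "1 / 2"])
  let ?S = "{g :: int \<Rightarrow>\<^sub>C real. peak_normalized k \<sigma> g}"
  let ?F = "\<lambda>g :: int \<Rightarrow>\<^sub>C real. Bcontfun (peak_map \<omega> a b k \<sigma> g)"
  have F: "apply_bcontfun (?F g) = peak_map \<omega> a b k \<sigma> g" if "g \<in> ?S" for g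
    using that
    by (intro Bcontfun_inverse peak_normalized_bcontfun[of k \<sigma>] peak_map_normalized[OF small \<sigma>]) simp
  show "complete ?S"
    by (rule complete_closed_subset[OF closed_peak_normalized subset_UNIV complete_UNIV_bcontfun])
  obtain f where "peak_normalized k \<sigma> f" using ex_peak_normalized[OF \<sigma>] ..
  then have "Bcontfun f \<in> ?S" using peak_normalized_bcontfun by (simp add: Bcontfun_inverse)
  then show "?S \<noteq> {}" by blast
  show "?F ` ?S \<subseteq> ?S" using F peak_map_normalized[OF small \<sigma>] by auto
  show "dist (?F g) (?F h) \<le> 1 / 2 * dist g h" if "g \<in> ?S" "h \<in> ?S" for g h
  proof (rule dist_bound)
    fix x
    have "\<bar>apply_bcontfun g y - apply_bcontfun h y\<bar> \<le> dist g h" for y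
      using dist_bounded[of g y h] by (simp add: dist_real_def)
    then have "\<bar>peak_map \<omega> a b k \<sigma> g x - peak_map \<omega> a b k \<sigma> h x\<bar> \<le> dist g h / 2"
      using that by (intro peak_map_contraction[OF small]) (auto simp: peak_normalized_def)
    then show "dist (apply_bcontfun (?F g) x) (apply_bcontfun (?F h) x) \<le> 1 / 2 * dist g h"
      using that by (simp add: F dist_real_def)
  qed
qed auto

lemma peak_map_unique_fixed_point:
  assumes small: "small_hopping \<omega> a b" and \<sigma>: "admissible_parity k \<sigma>"
  shows "\<exists>!f. peak_normalized k \<sigma> f \<and> peak_map \<omega> a b k \<sigma> f = f"
proof -
  let ?F = "\<lambda>g :: int \<Rightarrow>\<^sub>C real. Bcontfun (peak_map \<omega> a b k \<sigma> g)"
  obtain g :: "int \<Rightarrow>\<^sub>C real" where g: "peak_normalized k \<sigma> g" "?F g = g"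
    and unique: "\<And>g'. peak_normalized k \<sigma> (apply_bcontfun g') \<Longrightarrow> ?F g' = g' \<Longrightarrow> g' = g"
    using peak_map_bcontfun_unique_fixed_point[OF small \<sigma>] by blast
  have "peak_map \<omega> a b k \<sigma> g = apply_bcontfun (?F g)"
    using g(1)
    by (intro Bcontfun_inverse[symmetric] peak_normalized_bcontfun[of k \<sigma>]
        peak_map_normalized[OF small \<sigma>])
  also have "\<dots> = g" by (simp only: g(2))
  finally have fixed: "peak_map \<omega> a b k \<sigma> g = g" .
  show ?thesis
  proof (rule ex1I)
    show "peak_normalized k \<sigma> g \<and> peak_map \<omega> a b k \<sigma> g = g" using g(1) fixed by simp
  next
    fix f assume f: "peak_normalized k \<sigma> f \<and> peak_map \<omega> a b k \<sigma> f = f"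
    then have Bf: "apply_bcontfun (Bcontfun f) = f"
      by (intro Bcontfun_inverse peak_normalized_bcontfun[of k \<sigma>]) simp
    have "Bcontfun f = g" by (rule unique) (use f Bf in simp_all)
    then show "f = apply_bcontfun g" using Bf by simp
  qed
qed

lemma peak_map_fixed_imp_eigen:
  assumes small: "small_hopping \<omega> a b" and f: "peak_normalized k \<sigma> f"
    and fixed: "peak_map \<omega> a b k \<sigma> f = f"
  shows "a * lap f x + b * harm_pot \<omega> x * f x = peak_level \<omega> a b k f * f x"
proof -
  have parity: "\<And>x. f (- x) = \<sigma> * f x" and bound: "\<And>x. \<bar>f x\<bar> \<le> 1" and fk: "f (int k) = 1"
    using f by (auto simp: peak_normalized_def)
  have at_k: "a * lap f (int k) + b * harm_pot \<omega> (int k) * f (int k) = peak_level \<omega> a b k f * f (int k)"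
    using fk by (simp add: peak_level_def)
  consider "x = int k" | "x = - int k" | "x \<noteq> int k" "x \<noteq> - int k" by blast
  then show ?thesis
  proof cases
    case 1
    then show ?thesis using at_k by simp
  next
    case 2
    have "a * lap f (- int k) + b * harm_pot \<omega> (- int k) * f (- int k) =
        \<sigma> * (a * lap f (int k) + b * harm_pot \<omega> (int k) * f (int k))"
      using parity lap_parity[where f = f, OF parity] by (simp add: algebra_simps)
    also have "\<dots> = peak_level \<omega> a b k f * f (- int k)" using at_k parity by simp
    finally show ?thesis using 2 by simp
  next
    case 3
    define D where "D = b * harm_pot \<omega> x - peak_level \<omega> a b k f"
    have "b * \<omega>\<^sup>2 / 4 \<le> \<bar>D\<bar>"
      unfolding D_def using 3 small peak_level_near_potential[OF bound]
      by (intro peak_denominator_lower_bound[OF small]) (auto simp: small_hopping_def)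
    then have "D \<noteq> 0" using small by (auto simp: small_hopping_def)
    moreover have "f x = - a * lap f x / D"
      using 3 fun_cong[OF fixed, of x] by (simp add: peak_map_def D_def)
    ultimately show ?thesis by (simp add: D_def field_simps)
  qed
qed

lemma eigen_imp_peak_map_fixed:
  assumes small: "small_hopping \<omega> a b" and f: "peak_normalized k \<sigma> f"
    and eigen: "\<And>x. a * lap f x + b * harm_pot \<omega> x * f x = \<mu> * f x"
    and near: "\<bar>\<mu> - b * harm_pot \<omega> (int k)\<bar> \<le> 4 * a"
  shows "peak_level \<omega> a b k f = \<mu>" and "peak_map \<omega> a b k \<sigma> f = f"
proof -
  have parity: "\<And>x. f (- x) = \<sigma> * f x" and fk: "f (int k) = 1"
    using f by (auto simp: peak_normalized_def)
  show level: "peak_level \<omega> a b k f = \<mu>"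
    using eigen[of "int k"] fk by (simp add: peak_level_def algebra_simps)
  have "peak_map \<omega> a b k \<sigma> f x = f x" for x
  proof -
    consider "x = int k" | "x = - int k" "x \<noteq> int k" | "x \<noteq> int k" "x \<noteq> - int k" by blast
    then show ?thesis
    proof cases
      case 3
      have "b * \<omega>\<^sup>2 / 4 \<le> \<bar>b * harm_pot \<omega> x - \<mu>\<bar>"
        by (rule peak_denominator_lower_bound[OF small near 3])
      then have "b * harm_pot \<omega> x - \<mu> \<noteq> 0" using small by (auto simp: small_hopping_def)
      then show ?thesis using 3 eigen[of x] level by (simp add: peak_map_def field_simps)
    qed (use fk parity[of "int k"] in \<open>auto simp: peak_map_def\<close>)
  qed
  then show "peak_map \<omega> a b k \<sigma> f = f" ..
qed

lemma peak_denominator_quadratic_bound: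
  assumes small: "small_hopping \<omega> a b" and bound: "\<And>y. \<bar>f y\<bar> \<le> 1"
    and x: "2 * (real k)\<^sup>2 + 1 \<le> (real_of_int x)\<^sup>2"
  shows "16 * a * (real_of_int x)\<^sup>2 \<le> b * harm_pot \<omega> x - peak_level \<omega> a b k f"
proof -
  have a: "a > 0" "64 * a \<le> b * \<omega>\<^sup>2" using small by (auto simp: small_hopping_def)
  define Y where "Y = (real_of_int x)\<^sup>2"
  define K2 where "K2 = (real k)\<^sup>2"
  define B where "B = b * \<omega>\<^sup>2"
  have near: "\<bar>peak_level \<omega> a b k f - b * harm_pot \<omega> (int k)\<bar> \<le> 4 * a"
    using peak_level_near_potential[OF bound] a by simp
  have aB: "64 * a \<le> B" using a(2) by (simp add: B_def)
  have pot: "2 * (b * harm_pot \<omega> x - b * harm_pot \<omega> (int k)) = B * Y - B * K2"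
    by (simp add: harm_pot_def Y_def K2_def B_def algebra_simps)
  have "B * (Y + 1) \<le> B * (2 * Y - 2 * K2)"
    using x a by (intro mult_left_mono) (auto simp: B_def Y_def K2_def)
  then have "B * Y + B \<le> 2 * (B * Y) - 2 * (B * K2)" by (simp add: algebra_simps)
  define D where "D = b * harm_pot \<omega> x - peak_level \<omega> a b k f"
  have "B * Y \<le> 4 * D"
    using \<open>B * Y + B \<le> 2 * (B * Y) - 2 * (B * K2)\<close> abs_le_D1[OF near] pot aB a(1)
    unfolding D_def by argo
  moreover have "64 * a * Y \<le> B * Y" using aB by (rule mult_right_mono) (simp add: Y_def)
  ultimately have "16 * a * Y \<le> D" by linarith
  then show ?thesis by (simp add: Y_def D_def)
qed

text \<open>Off \<open>\<plusminus>k\<close> the fixed point is \<open>a \<Delta>f(x)\<close> divided by a denominator of order \<open>b x\<^sup>2\<close>.\<close>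

lemma peak_map_fixed_square_decay:
  assumes small: "small_hopping \<omega> a b" and bound: "\<And>y. \<bar>f y\<bar> \<le> 1"
    and fixed: "peak_map \<omega> a b k \<sigma> f = f"
  shows "(f x)\<^sup>2 \<le> (2 * (real k)\<^sup>2 + 2) / ((real_of_int x)\<^sup>2 + 1)"
proof -
  have a: "a > 0" using small by (simp add: small_hopping_def)
  define Y where "Y = (real_of_int x)\<^sup>2"
  define K2 where "K2 = (real k)\<^sup>2"
  have Y0: "Y \<ge> 0" and K2: "K2 \<ge> 0" by (simp_all add: Y_def K2_def)
  have "\<bar>f x\<bar> * \<bar>f x\<bar> \<le> \<bar>f x\<bar> * 1" using bound[of x] by (intro mult_left_mono) auto
  then have f2: "(f x)\<^sup>2 \<le> \<bar>f x\<bar>" by (simp add: power2_eq_square abs_mult_self_eq)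
  show ?thesis
  proof (cases "x\<^sup>2 \<le> 2 * (int k)\<^sup>2")
    case True
    then have "real_of_int (x\<^sup>2) \<le> real_of_int (2 * (int k)\<^sup>2)" by (simp only: of_int_le_iff)
    then have "Y \<le> 2 * K2" by (simp add: Y_def K2_def)
    then have "1 \<le> (2 * K2 + 2) / (Y + 1)" using Y0 by simp
    moreover have "(f x)\<^sup>2 \<le> 1" using f2 bound[of x] by linarith
    ultimately show ?thesis by (simp add: Y_def K2_def)
  next
    case False
    then have "real_of_int (2 * (int k)\<^sup>2 + 1) \<le> real_of_int (x\<^sup>2)" by (simp only: of_int_le_iff)
    then have x: "2 * (real k)\<^sup>2 + 1 \<le> (real_of_int x)\<^sup>2" by simp
    then have Y1: "1 \<le> Y" using zero_le_power2[of "real k"] unfolding Y_def by linarith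
    define D where "D = b * harm_pot \<omega> x - peak_level \<omega> a b k f"
    have DY: "16 * a * Y \<le> D"
      unfolding Y_def D_def by (rule peak_denominator_quadratic_bound[OF small bound x])
    moreover have "0 < 16 * a * Y" using a Y1 by simp
    ultimately have D: "D > 0" by linarith
    have "x \<noteq> int k" "x \<noteq> - int k" using False by auto
    then have "f x = - a * lap f x / D" using fun_cong[OF fixed, of x] by (simp add: peak_map_def D_def)
    then have "\<bar>f x * D\<bar> = \<bar>a * lap f x\<bar>" using D by (simp add: field_simps)
    then have "\<bar>f x\<bar> * D = a * \<bar>lap f x\<bar>" using D a by (simp add: abs_mult)
    also have "\<dots> \<le> a * 4" using a abs_lap_le[of f 1 x] bound by simp
    finally have "a * (16 * (\<bar>f x\<bar> * Y)) \<le> a * 4"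
      using mult_left_mono[OF DY, of "\<bar>f x\<bar>"] by (simp add: algebra_simps)
    then have "16 * (\<bar>f x\<bar> * Y) \<le> 4" using a by (simp only: mult_le_cancel_left_pos)
    then have fY: "\<bar>f x\<bar> * Y \<le> 1 / 4" by linarith
    have "(f x)\<^sup>2 * (Y + 1) \<le> \<bar>f x\<bar> * (2 * Y)" using f2 Y1 by (intro mult_mono) auto
    also have "\<dots> = 2 * (\<bar>f x\<bar> * Y)" by (rule mult.left_commute)
    also have "\<dots> \<le> 2 * K2 + 2" using fY K2 by linarith
    finally show ?thesis using Y0 by (simp add: Y_def K2_def pos_le_divide_eq add_nonneg_pos)
  qed
qed

definition peak_eigvec :: "real \<Rightarrow> real \<Rightarrow> real \<Rightarrow> nat \<Rightarrow> real \<Rightarrow> int \<Rightarrow> real" where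
  "peak_eigvec \<omega> a b k \<sigma> = (THE f. peak_normalized k \<sigma> f \<and> peak_map \<omega> a b k \<sigma> f = f)"

definition peak_eigval :: "real \<Rightarrow> real \<Rightarrow> real \<Rightarrow> nat \<Rightarrow> real \<Rightarrow> real" where
  "peak_eigval \<omega> a b k \<sigma> = peak_level \<omega> a b k (peak_eigvec \<omega> a b k \<sigma>)"

lemma peak_eigvec_normalized_fixed:
  assumes "small_hopping \<omega> a b" "admissible_parity k \<sigma>"
  shows "peak_normalized k \<sigma> (peak_eigvec \<omega> a b k \<sigma>)"
    and "peak_map \<omega> a b k \<sigma> (peak_eigvec \<omega> a b k \<sigma>) = peak_eigvec \<omega> a b k \<sigma>"
  using theI'[OF peak_map_unique_fixed_point[OF assms]] by (auto simp: peak_eigvec_def)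

lemma peak_eigvec_unique:
  assumes "small_hopping \<omega> a b" "admissible_parity k \<sigma>"
    and "peak_normalized k \<sigma> f" "peak_map \<omega> a b k \<sigma> f = f"
  shows "peak_eigvec \<omega> a b k \<sigma> = f"
  unfolding peak_eigvec_def using assms by (intro the1_equality peak_map_unique_fixed_point) auto

lemma peak_eigvec_eigenspace:
  assumes small: "small_hopping \<omega> a b" and \<sigma>: "admissible_parity k \<sigma>"
  shows "peak_eigvec \<omega> a b k \<sigma> \<in> eigenspace (harm_osc \<omega> a b) (peak_eigval \<omega> a b k \<sigma>)"
proof -
  note v = peak_eigvec_normalized_fixed[OF small \<sigma>]
  have "l2 (peak_eigvec \<omega> a b k \<sigma>)"
    using v
    by (intro l2_if_square_decay[where C = "2 * (real k)\<^sup>2 + 2"] peak_map_fixed_square_decay[OF small])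
       (auto simp: peak_normalized_def)
  then show ?thesis
    using peak_map_fixed_imp_eigen[OF small v] by (simp add: eigenspace_harm_osc_iff peak_eigval_def)
qed

lemma is_eigenvalue_peak_eigval:
  assumes "small_hopping \<omega> a b" "admissible_parity k \<sigma>"
  shows "is_eigenvalue (harm_osc \<omega> a b) (peak_eigval \<omega> a b k \<sigma>)"
proof -
  have "peak_eigvec \<omega> a b k \<sigma> (int k) = 1"
    using peak_eigvec_normalized_fixed(1)[OF assms] by (simp add: peak_normalized_def)
  then have "peak_eigvec \<omega> a b k \<sigma> \<noteq> (\<lambda>_. 0)" by auto
  then show ?thesis using peak_eigvec_eigenspace[OF assms] by (auto simp: is_eigenvalue_def)
qed

lemma peak_eigval_near_potential:
  assumes "small_hopping \<omega> a b" "admissible_parity k \<sigma>"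
  shows "\<bar>peak_eigval \<omega> a b k \<sigma> - b * harm_pot \<omega> (int k)\<bar> \<le> 4 * a"
  using peak_eigvec_normalized_fixed(1)[OF assms] assms(1) unfolding peak_eigval_def
  by (intro peak_level_near_potential) (auto simp: peak_normalized_def small_hopping_def)

lemma harm_osc_eigenfunction_peak_normalize:
  assumes small: "small_hopping \<omega> a b" and f: "f \<in> eigenspace (harm_osc \<omega> a b) \<mu>" "f \<noteq> (\<lambda>_. 0)"
  obtains k \<sigma> g where "admissible_parity k \<sigma>" "peak_normalized k \<sigma> g"
    "g \<in> eigenspace (harm_osc \<omega> a b) \<mu>" "\<bar>\<mu> - b * harm_pot \<omega> (int k)\<bar> \<le> 4 * a"
proof -
  have a: "a > 0" using small by (simp add: small_hopping_def)
  have l2f: "l2 f" and eigen: "\<And>x. a * lap f x + b * harm_pot \<omega> x * f x = \<mu> * f x"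
    using f(1) by (auto simp: eigenspace_harm_osc_iff)
  obtain x0 where x0: "\<And>x. \<bar>f x\<bar> \<le> \<bar>f x0\<bar>" using l2_abs_max[OF l2f] by blast
  have fx0: "f x0 \<noteq> 0" using f(2) x0 by fastforce
  have near: "\<bar>\<mu> - b * harm_pot \<omega> x0\<bar> \<le> 4 * a"
    using a x0 fx0 eigen[of x0] by (intro harm_osc_eigenvalue_near_peak) (auto simp: harm_osc_def)
  obtain \<sigma> where \<sigma>: "\<sigma> = 1 \<or> \<sigma> = -1" and parity: "\<And>x. f (- x) = \<sigma> * f x"
    using harm_osc_eigenfunction_parity[OF _ f(1) fx0] a by auto
  define k where "k = nat \<bar>x0\<bar>"
  have "int k = x0 \<or> int k = - x0" by (auto simp: k_def)
  then have fk: "\<bar>f (int k)\<bar> = \<bar>f x0\<bar>" using parity[of x0] \<sigma> by (auto simp: abs_mult)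
  define g where "g = (\<lambda>x. f x / f (int k))"
  have "admissible_parity k \<sigma>"
    using \<sigma> parity[of 0] fk fx0 by (cases "k = 0") (auto simp: admissible_parity_def)
  moreover have "peak_normalized k \<sigma> g"
    using fk fx0 x0 parity by (auto simp: peak_normalized_def g_def abs_divide divide_le_eq_1)
  moreover have "g \<in> eigenspace (harm_osc \<omega> a b) \<mu>"
  proof -
    have "l2 g"
      using summable_on_cmult_left[OF l2f[unfolded l2_def], of "inverse ((f (int k))\<^sup>2)"]
      by (simp add: l2_def g_def power_divide flip: divide_inverse)
    moreover have "lap g x = lap f x / f (int k)" for x by (simp add: g_def lap_def diff_divide_distrib)
    ultimately show ?thesis
      using eigen fk fx0 by (auto simp: eigenspace_harm_osc_iff g_def field_simps)
  qed
  moreover have "\<bar>\<mu> - b * harm_pot \<omega> (int k)\<bar> \<le> 4 * a"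
    using near by (simp add: k_def)
  ultimately show thesis by (rule that)
qed

lemma harm_osc_eigenvalue_eq_peak_eigval:
  assumes small: "small_hopping \<omega> a b" and ev: "is_eigenvalue (harm_osc \<omega> a b) \<mu>"
  obtains k \<sigma> where "admissible_parity k \<sigma>" "\<mu> = peak_eigval \<omega> a b k \<sigma>"
proof -
  obtain f where "f \<in> eigenspace (harm_osc \<omega> a b) \<mu>" "f \<noteq> (\<lambda>_. 0)"
    using ev by (auto simp: is_eigenvalue_def)
  then obtain k \<sigma> g where \<sigma>: "admissible_parity k \<sigma>" and g: "peak_normalized k \<sigma> g"
    and eigen: "g \<in> eigenspace (harm_osc \<omega> a b) \<mu>"
    and near: "\<bar>\<mu> - b * harm_pot \<omega> (int k)\<bar> \<le> 4 * a"
    using harm_osc_eigenfunction_peak_normalize[OF small] by metis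
  have fixed: "peak_level \<omega> a b k g = \<mu>" "peak_map \<omega> a b k \<sigma> g = g"
    using eigen_imp_peak_map_fixed[OF small g _ near] eigen by (auto simp: eigenspace_harm_osc_iff)
  have "peak_eigvec \<omega> a b k \<sigma> = g" by (rule peak_eigvec_unique[OF small \<sigma> g fixed(2)])
  then have "\<mu> = peak_eigval \<omega> a b k \<sigma>" using fixed(1) by (simp add: peak_eigval_def)
  with \<sigma> show thesis by (rule that)
qed

section \<open>Counting the eigenvalues\<close>

lemma peak_eigval_le:
  assumes "small_hopping \<omega> a b" "admissible_parity k \<sigma>" "k \<le> n"
  shows "peak_eigval \<omega> a b k \<sigma> \<le> b * harm_pot \<omega> (int n) + 4 * a"
proof -
  have "b * harm_pot \<omega> (int k) \<le> b * harm_pot \<omega> (int n)"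
    using assms(1,3) harm_pot_mono by (simp add: small_hopping_def)
  then show ?thesis using peak_eigval_near_potential[OF assms(1,2)] by linarith
qed

lemma peak_eigval_ge:
  assumes "small_hopping \<omega> a b" "admissible_parity k \<sigma>" "n \<le> k"
  shows "b * harm_pot \<omega> (int n) - 4 * a \<le> peak_eigval \<omega> a b k \<sigma>"
proof -
  have "b * harm_pot \<omega> (int n) \<le> b * harm_pot \<omega> (int k)"
    using assms(1,3) harm_pot_mono by (simp add: small_hopping_def)
  then show ?thesis using peak_eigval_near_potential[OF assms(1,2)] by linarith
qed

lemma peak_eigval_gt:
  assumes small: "small_hopping \<omega> a b" and "admissible_parity k \<sigma>" "n < k"
  shows "b * harm_pot \<omega> (int n) + 4 * a < peak_eigval \<omega> a b k \<sigma>"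
proof -
  have a: "a > 0" "b > 0" "64 * a \<le> b * \<omega>\<^sup>2" using small by (auto simp: small_hopping_def)
  have "b * (harm_pot \<omega> (int n) + \<omega>\<^sup>2 / 2) \<le> b * harm_pot \<omega> (int k)"
    using harm_pot_gap_mono[OF \<open>n < k\<close>] a(2) by (intro mult_left_mono) auto
  then show ?thesis using peak_eigval_near_potential[OF assms(1,2)] a by (simp add: algebra_simps)
qed

lemma peak_eigval_inj:
  assumes small: "small_hopping \<omega> a b"
    and \<sigma>: "admissible_parity k \<sigma>" and \<sigma>': "admissible_parity k' \<sigma>'"
    and eq: "peak_eigval \<omega> a b k \<sigma> = peak_eigval \<omega> a b k' \<sigma>'"
  shows "k = k'" "\<sigma> = \<sigma>'"
proof -
  show k: "k = k'"
    using peak_eigval_le[OF small \<sigma> order_refl] peak_eigval_gt[OF small \<sigma>', of k]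
      peak_eigval_le[OF small \<sigma>' order_refl] peak_eigval_gt[OF small \<sigma>, of k'] eq
    by (cases k k' rule: linorder_cases) auto
  define v where "v = peak_eigvec \<omega> a b k \<sigma>"
  define v' where "v' = peak_eigvec \<omega> a b k \<sigma>'"
  have v: "v (int k) = 1" "v (- int k) = \<sigma>" and v': "v' (int k) = 1" "v' (- int k) = \<sigma>'"
    using peak_eigvec_normalized_fixed(1)[OF small \<sigma>] peak_eigvec_normalized_fixed(1)[OF small \<sigma>'[folded k]]
    by (auto simp: v_def v'_def peak_normalized_def)
  have "v' = (\<lambda>x. (v' (int k) / v (int k)) * v x)"
    using peak_eigvec_eigenspace[OF small \<sigma>] peak_eigvec_eigenspace[OF small \<sigma>'[folded k]]
      eq small v(1)
    unfolding v_def v'_def k[symmetric]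
    by (intro harm_osc_eigenfunctions_proportional) (auto simp: small_hopping_def)
  then have "v' = v" using v(1) v'(1) by simp
  then show "\<sigma> = \<sigma>'" using v(2) v'(2) by simp
qed

lemma eig_count_harm_osc_eq_card:
  assumes small: "small_hopping \<omega> a b"
  shows "eig_count (harm_osc \<omega> a b) t =
    card {(k, \<sigma>). admissible_parity k \<sigma> \<and> peak_eigval \<omega> a b k \<sigma> \<le> t}"
proof -
  let ?P = "{(k, \<sigma>). admissible_parity k \<sigma> \<and> peak_eigval \<omega> a b k \<sigma> \<le> t}"
  have "{\<mu>. is_eigenvalue (harm_osc \<omega> a b) \<mu> \<and> \<mu> \<le> t} = (\<lambda>(k, \<sigma>). peak_eigval \<omega> a b k \<sigma>) ` ?P"
    using is_eigenvalue_peak_eigval[OF small] harm_osc_eigenvalue_eq_peak_eigval[OF small]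
    by (auto simp: image_iff) blast
  moreover have "inj_on (\<lambda>(k, \<sigma>). peak_eigval \<omega> a b k \<sigma>) ?P"
    using peak_eigval_inj[OF small] by (auto simp: inj_on_def)
  moreover have "a \<noteq> 0" using small by (simp add: small_hopping_def)
  ultimately show ?thesis by (simp add: eig_count_harm_osc card_image)
qed

lemma admissible_parity_less_eq:
  "{(k, \<sigma>). admissible_parity k \<sigma> \<and> k < n} = {..<n} \<times> {1} \<union> {1..<n} \<times> {-1}"
  by (auto simp: admissible_parity_def)

lemma card_admissible_parity_less: "card {(k, \<sigma>). admissible_parity k \<sigma> \<and> k < n} = 2 * n - 1"
proof -
  have "card ({..<n} \<times> {1::real} \<union> {1..<n} \<times> {-1}) =
      card ({..<n} \<times> {1::real}) + card ({1..<n} \<times> {-1::real})"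
    by (rule card_Un_disjoint) auto
  then show ?thesis unfolding admissible_parity_less_eq by (simp add: card_cartesian_product)
qed

lemma admissible_parity_le_eq:
  "{(k, \<sigma>). admissible_parity k \<sigma> \<and> k \<le> n} = {..n} \<times> {1} \<union> {1..n} \<times> {-1}"
  by (auto simp: admissible_parity_def)

lemma card_admissible_parity_le: "card {(k, \<sigma>). admissible_parity k \<sigma> \<and> k \<le> n} = 2 * n + 1"
proof -
  have "card ({..n} \<times> {1::real} \<union> {1..n} \<times> {-1}) =
      card ({..n} \<times> {1::real}) + card ({1..n} \<times> {-1::real})"
    by (rule card_Un_disjoint) auto
  then show ?thesis unfolding admissible_parity_le_eq by (simp add: card_cartesian_product)
qed

lemma E_between:
  assumes below: "\<And>t. t < L \<Longrightarrow> eig_count H t \<le> j" and above: "j < eig_count H U"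
  shows "L \<le> E H j" "E H j \<le> U"
proof -
  have lower: "L \<le> t" if "j < eig_count H t" for t
    using that le_less_linear[of L t] below[of t] by auto
  show "E H j \<le> U"
    unfolding E_def using above lower by (intro cInf_lower) (auto simp: bdd_below_def)
  show "L \<le> E H j"
    unfolding E_def using above lower by (intro cInf_greatest) auto
qed

lemma E_harm_osc_near_potential:
  assumes small: "small_hopping \<omega> a b" and j: "2 * n - 1 \<le> j" "j \<le> 2 * n"
  shows "\<bar>E (harm_osc \<omega> a b) j - b * harm_pot \<omega> (int n)\<bar> \<le> 4 * a"
proof -
  have below: "eig_count (harm_osc \<omega> a b) t \<le> j" if t: "t < b * harm_pot \<omega> (int n) - 4 * a" for t
  proof -
    have "{(k, \<sigma>). admissible_parity k \<sigma> \<and> peak_eigval \<omega> a b k \<sigma> \<le> t} \<subseteq>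
        {(k, \<sigma>). admissible_parity k \<sigma> \<and> k < n}"
      using peak_eigval_ge[OF small] t by (force simp: not_less[symmetric])
    from card_mono[OF _ this]
    have "card {(k, \<sigma>). admissible_parity k \<sigma> \<and> peak_eigval \<omega> a b k \<sigma> \<le> t} \<le> 2 * n - 1"
      using card_admissible_parity_less[of n] unfolding admissible_parity_less_eq by simp
    then show ?thesis using j by (simp add: eig_count_harm_osc_eq_card[OF small])
  qed
  have "{(k, \<sigma>). admissible_parity k \<sigma> \<and> peak_eigval \<omega> a b k \<sigma> \<le> b * harm_pot \<omega> (int n) + 4 * a} =
      {(k, \<sigma>). admissible_parity k \<sigma> \<and> k \<le> n}"
    using peak_eigval_le[OF small] peak_eigval_gt[OF small] by (force simp: not_le[symmetric])
  then have above: "j < eig_count (harm_osc \<omega> a b) (b * harm_pot \<omega> (int n) + 4 * a)"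
    using j by (simp add: eig_count_harm_osc_eq_card[OF small] card_admissible_parity_le)
  show ?thesis using E_between[where L = "b * harm_pot \<omega> (int n) - 4 * a", OF below above] by linarith
qed

section \<open>The rescaled eigenvalues as \<open>N \<rightarrow> \<infinity>\<close>\<close>

lemma abs_divide_diff_le:
  fixes e v a b :: real
  assumes "b > 0" "\<bar>e - b * v\<bar> \<le> a"
  shows "\<bar>e / b - v\<bar> \<le> a / b"
proof -
  have "e / b - v = (e - b * v) / b" using assms(1) by (simp add: field_simps)
  then show ?thesis using assms by (simp add: abs_divide divide_right_mono)
qed

lemma E_H_op_scaled_near_potential:
  assumes N: "N \<ge> 1" and small: "64 * (real N powr (2 + 2 * \<gamma>) / 2) < \<omega>\<^sup>2" and \<gamma>: "\<gamma> < 0"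
    and j: "2 * n - 1 \<le> j" "j \<le> 2 * n"
  shows "\<bar>E (H_op (harm_pot \<omega>) \<gamma> N) j / real N powr (2 * \<bar>\<gamma>\<bar>) - harm_pot \<omega> (int n)\<bar>
    \<le> 4 * (real N powr (2 + 2 * \<gamma>) / 2)"
proof -
  define a where "a = (real N)\<^sup>2 / 2"
  define b where "b = real N powr (-2 * \<gamma>)"
  have b: "b > 0" and b_eq: "real N powr (2 * \<bar>\<gamma>\<bar>) = b" using N \<gamma> by (auto simp: b_def)
  have "real N powr (2 + 2 * \<gamma>) = real N powr 2 / b"
    using powr_diff[of "real N" 2 "- 2 * \<gamma>"] by (simp add: b_def)
  then have ratio: "real N powr (2 + 2 * \<gamma>) / 2 = a / b" using N by (simp add: a_def powr_numeral)
  have "small_hopping \<omega> a b"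
    using small b N unfolding ratio by (simp add: small_hopping_def a_def field_simps)
  then have "\<bar>E (harm_osc \<omega> a b) j - b * harm_pot \<omega> (int n)\<bar> \<le> 4 * a"
    using j by (rule E_harm_osc_near_potential)
  then have "\<bar>E (harm_osc \<omega> a b) j / b - harm_pot \<omega> (int n)\<bar> \<le> 4 * a / b"
    using b by (intro abs_divide_diff_le)
  moreover have "H_op (harm_pot \<omega>) \<gamma> N = harm_osc \<omega> a b"
    unfolding a_def b_def by (rule H_op_eq_harm_osc)
  ultimately show ?thesis unfolding b_eq ratio by simp
qed

lemma E_H_op_scaled_tendsto:
  fixes \<omega> \<gamma> :: real
  assumes \<omega>: "\<omega> \<noteq> 0" and \<gamma>: "\<gamma> < -1" and j: "2 * n - 1 \<le> j" "j \<le> 2 * n"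
  shows "(\<lambda>N. E (H_op (harm_pot \<omega>) \<gamma> N) j / real N powr (2 * \<bar>\<gamma>\<bar>)) \<longlonglongrightarrow> harm_pot \<omega> (int n)"
proof -
  define r where "r N = real N powr (2 + 2 * \<gamma>) / 2" for N :: nat
  have "(\<lambda>N. real N powr (2 + 2 * \<gamma>)) \<longlonglongrightarrow> 0"
    by (rule tendsto_neg_powr[OF _ filterlim_real_sequentially]) (use \<gamma> in simp)
  then have r: "r \<longlonglongrightarrow> 0" unfolding r_def by (rule tendsto_divide_zero)
  have "\<omega>\<^sup>2 / 64 > 0" using \<omega> by simp
  with r have "eventually (\<lambda>N. r N < \<omega>\<^sup>2 / 64) sequentially" by (rule order_tendstoD(2))
  then have "eventually (\<lambda>N. norm (E (H_op (harm_pot \<omega>) \<gamma> N) j / real N powr (2 * \<bar>\<gamma>\<bar>)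
      - harm_pot \<omega> (int n)) \<le> 4 * r N) sequentially"
    using eventually_ge_at_top[of 1]
  proof eventually_elim
    case (elim N)
    have "64 * (real N powr (2 + 2 * \<gamma>) / 2) < \<omega>\<^sup>2" using elim(1) by (simp add: r_def)
    with elim(2) \<gamma> j show ?case
      unfolding r_def real_norm_def by (intro E_H_op_scaled_near_potential) simp_all
  qed
  moreover have "(\<lambda>N. 4 * r N) \<longlonglongrightarrow> 0" using tendsto_mult_right_zero[OF r, of 4] by simp
  ultimately have "(\<lambda>N. E (H_op (harm_pot \<omega>) \<gamma> N) j / real N powr (2 * \<bar>\<gamma>\<bar>)
      - harm_pot \<omega> (int n)) \<longlonglongrightarrow> 0"
    by (rule Lim_null_comparison)
  then show ?thesis by (rule LIM_zero_cancel)
qed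

theorem proposition4p2:
  fixes \<omega> \<gamma> :: real
  assumes "\<omega> > 0" and "\<gamma> < -1"
  shows "(\<lambda>N. E (H_op (harm_pot \<omega>) \<gamma> N) 0 / real N powr (2 * \<bar>\<gamma>\<bar>)) \<longlonglongrightarrow> 0 \<and>
         (\<forall>n::nat. n \<ge> 1 \<longrightarrow>
           (\<lambda>N. E (H_op (harm_pot \<omega>) \<gamma> N) (2 * n) / real N powr (2 * \<bar>\<gamma>\<bar>))
              \<longlonglongrightarrow> \<omega>\<^sup>2 * (real n)\<^sup>2 / 2 \<and>
           (\<lambda>N. E (H_op (harm_pot \<omega>) \<gamma> N) (2 * n - 1) / real N powr (2 * \<bar>\<gamma>\<bar>))
              \<longlonglongrightarrow> \<omega>\<^sup>2 * (real n)\<^sup>2 / 2)"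
proof -
  have \<omega>: "\<omega> \<noteq> 0" using assms(1) by simp
  have limit: "(\<lambda>N. E (H_op (harm_pot \<omega>) \<gamma> N) j / real N powr (2 * \<bar>\<gamma>\<bar>))
      \<longlonglongrightarrow> \<omega>\<^sup>2 * (real n)\<^sup>2 / 2" if "2 * n - 1 \<le> j" "j \<le> 2 * n" for n j
    using E_H_op_scaled_tendsto[OF \<omega> assms(2) that] by (simp add: harm_pot_def)
  show ?thesis
    using limit[of 0 0] limit[of _ "2 * _"] limit[of _ "2 * _ - 1"] by auto
qed

end
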